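(* Let $\bar x\in\mathbb{C}^n$ be a sparsest solution of problem (P), i.e. an optimal solution of (P). Suppose $X^*\in\mathbb{C}^{(n+1)\times(n+1)}$ satisfies all of the following: - $B(X^* )=y$, where $y=(y_1,\dots,y_N)$; - $X^*$ is Hermitian positive semidefinite; - $\operatorname{rank}(X^* )=1$; - $X^*_{1,1}=1$. Suppose further that $B$ is $(\epsilon,2\|X^*\|_0)$-RIP for some $\epsilon<1$. Then: - $X^*=\begin{bmatrix}1\\ \bar x\end{bmatrix}\begin{bmatrix}1 & \bar x^H\end{bmatrix}$; - $X^*_{2:n+1,1}=\bar x$; - $X^*$ is the unique matrix with the properties listed above, and $\bar x$ is the unique sparsest solution of (P).
   Context: Fix integers $n,N\ge 1$ and data $a_i\in\mathbb{C}$, $b_i,c_i\in\mathbb{C}^n$, $Q_i\in\mathbb{C}^{n\times n}$, $y_i\in\mathbb{C}$ for $i=1,\dots,N$. Problem (P) is $$\min_{x\in\mathbb{C}^n}\|x\|_0\quad\text{subject to}\quad y_i=a_i+b_i^H x+x^H c_i+x^H Q_i x,\quad i=1,\dots,N.$$ Here $\|\cdot\|_0$ counts the nonzero entries of a vector or matrix, and ${}^H$ denotes conjugate transpose. Let $\Phi_i=\begin{bmatrix} a_i & b_i^H\\ c_i & Q_i\end{bmatrix}\in\mathbb{C}^{(n+1)\times(n+1)}$. Define the linear operator $B:\mathbb{C}^{(n+1)\times(n+1)}\to\mathbb{C}^N$ by $B(X)=(\operatorname{tr}(\Phi_i X))_{i=1}^N$. A linear operator $B$ of this form is called $(\epsilon,k)$-RIP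 if $\left|\frac{\|B(X)\|^2}{\|X\|^2}-1\right|<\epsilon$ for every nonzero $X\in\mathbb{C}^{(n+1)\times(n+1)}$ with $\|X\|_0\le k$. In this condition $\|B(X)\|$ is the Euclidean norm in $\mathbb{C}^N$ and $\|X\|$ is the spectral norm. $X_{2:n+1,1}$ denotes the vector formed by entries $2,\dots,n+1$ of the first column of $X$. *)

theory Defs
  imports "Jordan_Normal_Form.Schur_Decomposition" "Jordan_Normal_Form.DL_Rank"
begin

text \<open>Matrices and vectors are Jordan_Normal_Form matrices/vectors over complex,
  indexed from 0. Row/column 0 of an (n+1)x(n+1) matrix plays the role of the
  paper's index 1.\<close>

definition mtrace :: "complex mat \<Rightarrow> complex" where
  "mtrace A = (\<Sum>i<dim_row A. A $$ (i, i))"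

definition vnnz :: "complex vec \<Rightarrow> nat" where
  "vnnz v = card {i. i < dim_vec v \<and> v $ i \<noteq> 0}"

definition mnnz :: "complex mat \<Rightarrow> nat" where
  "mnnz A = card {(i, j). i < dim_row A \<and> j < dim_col A \<and> A $$ (i, j) \<noteq> 0}"

definition vnorm :: "complex vec \<Rightarrow> real" where
  "vnorm v = sqrt (\<Sum>i<dim_vec v. (cmod (v $ i))\<^sup>2)"

definition spec_norm :: "complex mat \<Rightarrow> real" where
  "spec_norm A = Sup {vnorm (A *\<^sub>v v) | v. v \<in> carrier_vec (dim_col A) \<and> vnorm v = 1}"

definition hermitian_mat :: "complex mat \<Rightarrow> bool" where
  "hermitian_mat A \<longleftrightarrow> A \<in> carrier_mat (dim_row A) (dim_row A) \<and> mat_adjoint A = A"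

definition psd_mat :: "complex mat \<Rightarrow> bool" where
  "psd_mat A \<longleftrightarrow> hermitian_mat A \<and>
     (\<forall>v \<in> carrier_vec (dim_row A). conjugate v \<bullet> (A *\<^sub>v v) \<in> \<real> \<and>
                                   0 \<le> Re (conjugate v \<bullet> (A *\<^sub>v v)))"

text \<open>The data matrices Phi_i = [a_i, b_i^H; c_i, Q_i].\<close>
definition Phi :: "nat \<Rightarrow> complex \<Rightarrow> complex vec \<Rightarrow> complex vec \<Rightarrow> complex mat \<Rightarrow> complex mat" where
  "Phi n a b c Q = mat (n+1) (n+1) (\<lambda>(r, s).
      if r = 0 \<and> s = 0 then a
      else if r = 0 then cnj (b $ (s - 1))
      else if s = 0 then c $ (r - 1)
      else Q $$ (r - 1, s - 1))"

definition Bop :: "nat \<Rightarrow> nat \<Rightarrow> (nat \<Rightarrow> complex) \<Rightarrow> (nat \<Rightarrow> complex vec) \<Rightarrow>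
    (nat \<Rightarrow> complex vec) \<Rightarrow> (nat \<Rightarrow> complex mat) \<Rightarrow> complex mat \<Rightarrow> complex vec" where
  "Bop n N a b c Q X = vec N (\<lambda>i. mtrace (Phi n (a i) (b i) (c i) (Q i) * X))"

definition is_RIP :: "nat \<Rightarrow> nat \<Rightarrow> (nat \<Rightarrow> complex) \<Rightarrow> (nat \<Rightarrow> complex vec) \<Rightarrow>
    (nat \<Rightarrow> complex vec) \<Rightarrow> (nat \<Rightarrow> complex mat) \<Rightarrow> real \<Rightarrow> nat \<Rightarrow> bool" where
  "is_RIP n N a b c Q eps k \<longleftrightarrow>
     (\<forall>X \<in> carrier_mat (n+1) (n+1). X \<noteq> 0\<^sub>m (n+1) (n+1) \<and> mnnz X \<le> k \<longrightarrow>
        \<bar>(vnorm (Bop n N a b c Q X))\<^sup>2 / (spec_norm X)\<^sup>2 - 1\<bar> < eps)"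

definition feasibleP :: "nat \<Rightarrow> nat \<Rightarrow> (nat \<Rightarrow> complex) \<Rightarrow> (nat \<Rightarrow> complex vec) \<Rightarrow>
    (nat \<Rightarrow> complex vec) \<Rightarrow> (nat \<Rightarrow> complex mat) \<Rightarrow> complex vec \<Rightarrow> complex vec \<Rightarrow> bool" where
  "feasibleP n N a b c Q y x \<longleftrightarrow> x \<in> carrier_vec n \<and>
     (\<forall>i<N. y $ i = a i + (conjugate (b i) \<bullet> x) + (conjugate x \<bullet> c i)
                     + (conjugate x \<bullet> (Q i *\<^sub>v x)))"

definition optimalP :: "nat \<Rightarrow> nat \<Rightarrow> (nat \<Rightarrow> complex) \<Rightarrow> (nat \<Rightarrow> complex vec) \<Rightarrow>
    (nat \<Rightarrow> complex vec) \<Rightarrow> (nat \<Rightarrow> complex mat) \<Rightarrow> complex vec \<Rightarrow> complex vec \<Rightarrow> bool" where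
  "optimalP n N a b c Q y x \<longleftrightarrow> feasibleP n N a b c Q y x \<and>
     (\<forall>z. feasibleP n N a b c Q y z \<longrightarrow> vnnz x \<le> vnnz z)"

definition lifted_props :: "nat \<Rightarrow> nat \<Rightarrow> (nat \<Rightarrow> complex) \<Rightarrow> (nat \<Rightarrow> complex vec) \<Rightarrow>
    (nat \<Rightarrow> complex vec) \<Rightarrow> (nat \<Rightarrow> complex mat) \<Rightarrow> complex vec \<Rightarrow> complex mat \<Rightarrow> bool" where
  "lifted_props n N a b c Q y X \<longleftrightarrow> X \<in> carrier_mat (n+1) (n+1) \<and>
     Bop n N a b c Q X = y \<and> hermitian_mat X \<and> psd_mat X \<and>
     vec_space.rank (n+1) X = 1 \<and> X $$ (0, 0) = 1"

definition lift_outer :: "complex vec \<Rightarrow> complex mat" where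
  "lift_outer x = (let u = vCons 1 x in
     mat (dim_vec u) (dim_vec u) (\<lambda>(i, j). u $ i * cnj (u $ j)))"

text \<open>X_{2:n+1,1}.\<close>
definition first_col_tail :: "nat \<Rightarrow> complex mat \<Rightarrow> complex vec" where
  "first_col_tail n X = vec n (\<lambda>i. X $$ (i + 1, 0))"

end

theory Submission imports Defs begin

text \<open>A Hermitian rank-one matrix X with X(1,1) = 1 is the lift [1; x][1, x^H] of its first
  column tail x, and B applied to such a lift evaluates the quadratic constraints of (P) at x,
  so x is feasible. The lift of a sparsest solution x0 has (|x0|_0 + 1)^2 \<le> (|x|_0 + 1)^2 = |X|_0
  nonzero entries, so the difference of X and that lift is a 2|X|_0-sparse matrix in the kernel
  of B. The RIP with \<epsilon> < 1 forbids nonzero such matrices, which gives X = lift x0; uniqueness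
  follows because every optimal solution and every admissible matrix is pinned down this way.\<close>

lemma lin_indpt_pair:
  fixes u w :: "complex vec"
  assumes u: "u \<in> carrier_vec m" and w: "w \<in> carrier_vec m"
    and u0: "u $ 0 = 1" and m: "0 < m" and not_multiple: "w \<noteq> w $ 0 \<cdot>\<^sub>v u"
  shows "module.lin_indpt class_ring (module_vec TYPE(complex) m) {u, w}"
proof -
  interpret vs: vec_space "TYPE(complex)" m .
  have uw: "u \<noteq> w" using not_multiple u0 u by (metis one_smult_vec)
  show ?thesis
  proof (rule vs.finite_lin_indpt2)
    show "{u, w} \<subseteq> carrier_vec m" using u w by simp
  next
    fix a assume "vs.lincomb a {u, w} = 0\<^sub>v m"
    then have comp: "a u * u $ i + a w * w $ i = 0" if "i < m" for i
      using vs.lincomb_index[OF that, of "{u, w}" a] u w uw that by simp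
    have au: "a u = - a w * w $ 0" using comp[OF m] u0 by (simp add: eq_neg_iff_add_eq_0)
    have "a w = 0"
    proof (rule ccontr)
      assume aw: "a w \<noteq> 0"
      have "w = w $ 0 \<cdot>\<^sub>v u"
      proof (rule eq_vecI)
        fix i assume "i < dim_vec (w $ 0 \<cdot>\<^sub>v u)"
        then have i: "i < m" using u by simp
        have "a w * (w $ i - w $ 0 * u $ i) = 0" using comp[OF i] au by (simp add: algebra_simps)
        then show "w $ i = (w $ 0 \<cdot>\<^sub>v u) $ i" using aw i u by simp
      qed (use u w in simp)
      then show False using not_multiple by simp
    qed
    then show "\<forall>v\<in>{u, w}. a v = 0" using au by simp
  qed simp
qed

lemma rank_one_col_proportional:
  fixes X :: "complex mat"
  assumes X: "X \<in> carrier_mat m m" and rank: "vec_space.rank m X \<le> 1"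
    and pivot: "X $$ (0, 0) = 1" and j: "j < m"
  shows "col X j = X $$ (0, j) \<cdot>\<^sub>v col X 0"
proof (rule ccontr)
  interpret vs: vec_space "TYPE(complex)" m .
  assume ne: "col X j \<noteq> X $$ (0, j) \<cdot>\<^sub>v col X 0"
  have m: "0 < m" using j by simp
  have indpt: "vs.lin_indpt {col X 0, col X j}"
    using lin_indpt_pair[of "col X 0" m "col X j"] ne X j m pivot by simp
  have "{col X 0, col X j} \<subseteq> set (cols X)" using X j m by (auto simp: cols_def)
  then have "card {col X 0, col X j} \<le> vs.rank X" by (rule vs.rank_ge_card_indpt[OF X _ indpt])
  moreover have "col X 0 \<noteq> col X j"
  proof
    assume eq: "col X 0 = col X j"
    then have "X $$ (0, j) = 1" using X j m pivot by (metis carrier_matD index_col)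
    then show False using ne eq by simp
  qed
  ultimately show False using rank by simp
qed

lemma hermitian_rank_one_eq_lift_outer:
  assumes X: "X \<in> carrier_mat (n+1) (n+1)" and herm: "hermitian_mat X"
    and rank: "vec_space.rank (n+1) X \<le> 1" and pivot: "X $$ (0, 0) = 1"
  shows "X = lift_outer (first_col_tail n X)"
proof (rule eq_matI)
  let ?u = "vCons 1 (first_col_tail n X)"
  have u: "?u $ i = X $$ (i, 0)" if "i < n+1" for i
    using that pivot by (cases i) (auto simp: first_col_tail_def)
  fix i j assume "i < dim_row (lift_outer (first_col_tail n X))"
    "j < dim_col (lift_outer (first_col_tail n X))"
  then have i: "i < n+1" and j: "j < n+1" by (simp_all add: lift_outer_def first_col_tail_def Let_def)
  have "X $$ (0, j) = mat_adjoint X $$ (0, j)" using herm by (simp add: hermitian_mat_def)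
  also have "\<dots> = cnj (X $$ (j, 0))" using X j by (simp add: mat_adjoint_def mat_of_rows_def)
  finally have row: "X $$ (0, j) = cnj (X $$ (j, 0))" .
  have "col X j $ i = (X $$ (0, j) \<cdot>\<^sub>v col X 0) $ i"
    using rank_one_col_proportional[OF X rank pivot j] by simp
  then have "X $$ (i, j) = X $$ (i, 0) * cnj (X $$ (j, 0))" using X i j row by simp
  then show "X $$ (i, j) = lift_outer (first_col_tail n X) $$ (i, j)"
    using i j u[OF i] u[OF j] by (simp add: lift_outer_def first_col_tail_def Let_def)
qed (use X in \<open>simp_all add: lift_outer_def first_col_tail_def Let_def\<close>)

lemma first_col_tail_lift_outer: "x \<in> carrier_vec n \<Longrightarrow> first_col_tail n (lift_outer x) = x"
  by (auto simp: first_col_tail_def lift_outer_def Let_def)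

lemma lift_outer_carrier: "x \<in> carrier_vec n \<Longrightarrow> lift_outer x \<in> carrier_mat (n+1) (n+1)"
  by (simp add: lift_outer_def Let_def)

lemma mtrace_mult:
  assumes "A \<in> carrier_mat m m" "X \<in> carrier_mat m m"
  shows "mtrace (A * X) = (\<Sum>i<m. \<Sum>k<m. A $$ (i, k) * X $$ (k, i))"
  using assms unfolding mtrace_def
  by (auto simp: scalar_prod_def atLeast0LessThan intro!: sum.cong)

lemma mtrace_mult_minus_right:
  assumes A: "A \<in> carrier_mat m m" and X: "X \<in> carrier_mat m m" and Y: "Y \<in> carrier_mat m m"
  shows "mtrace (A * (X - Y)) = mtrace (A * X) - mtrace (A * Y)"
proof -
  have "mtrace (A * (X - Y)) = (\<Sum>i<m. \<Sum>k<m. A $$ (i, k) * (X $$ (k, i) - Y $$ (k, i)))"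
    unfolding mtrace_mult[OF A minus_carrier_mat[OF Y]] using X Y by (intro sum.cong) auto
  then show ?thesis by (simp add: mtrace_mult[OF A X] mtrace_mult[OF A Y] right_diff_distrib sum_subtractf)
qed

lemma Phi_carrier: "Phi n a b c Q \<in> carrier_mat (n+1) (n+1)"
  by (simp add: Phi_def)

lemma Bop_minus:
  assumes "X \<in> carrier_mat (n+1) (n+1)" "Y \<in> carrier_mat (n+1) (n+1)"
  shows "Bop n N a b c Q (X - Y) = Bop n N a b c Q X - Bop n N a b c Q Y"
  using mtrace_mult_minus_right[OF Phi_carrier assms] by (auto simp: Bop_def)

lemma mtrace_Phi_mult_lift_outer:
  assumes x: "x \<in> carrier_vec n" and b: "b \<in> carrier_vec n" and c: "c \<in> carrier_vec n"
    and Q: "Q \<in> carrier_mat n n"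
  shows "mtrace (Phi n a b c Q * lift_outer x) =
     a + (conjugate b \<bullet> x) + (conjugate x \<bullet> c) + (conjugate x \<bullet> (Q *\<^sub>v x))"
proof -
  let ?u = "vCons 1 x"
  have "mtrace (Phi n a b c Q * lift_outer x) =
     (\<Sum>i<n+1. \<Sum>k<n+1. Phi n a b c Q $$ (i, k) * (?u $ k * cnj (?u $ i)))"
    using mtrace_mult[OF Phi_carrier lift_outer_carrier[OF x]] x by (simp add: lift_outer_def Let_def)
  also have "\<dots> = a + (\<Sum>k<n. cnj (b $ k) * x $ k) + (\<Sum>i<n. c $ i * cnj (x $ i))
      + (\<Sum>i<n. \<Sum>k<n. Q $$ (i, k) * (x $ k * cnj (x $ i)))"
    by (simp del: sum.lessThan_Suc add: sum.lessThan_Suc_shift Phi_def sum.distrib algebra_simps)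
  also have "\<dots> = a + (conjugate b \<bullet> x) + (conjugate x \<bullet> c) + (conjugate x \<bullet> (Q *\<^sub>v x))"
    using x b c Q by (simp add: scalar_prod_def atLeast0LessThan sum_distrib_left algebra_simps)
  finally show ?thesis .
qed

lemma feasibleP_iff_Bop_lift_outer:
  assumes b: "\<And>i. i < N \<Longrightarrow> b i \<in> carrier_vec n" and c: "\<And>i. i < N \<Longrightarrow> c i \<in> carrier_vec n"
    and Q: "\<And>i. i < N \<Longrightarrow> Q i \<in> carrier_mat n n"
    and y: "y \<in> carrier_vec N" and x: "x \<in> carrier_vec n"
  shows "feasibleP n N a b c Q y x \<longleftrightarrow> Bop n N a b c Q (lift_outer x) = y"
  using x y mtrace_Phi_mult_lift_outer[OF x b c Q]
  by (auto simp: feasibleP_def Bop_def intro!: eq_vecI)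

lemma mnnz_lift_outer:
  assumes x: "x \<in> carrier_vec n"
  shows "mnnz (lift_outer x) = Suc (vnnz x) * Suc (vnnz x)"
proof -
  define S where "S = {i. i < n+1 \<and> vCons 1 x $ i \<noteq> 0}"
  have "S = insert 0 (Suc ` {i. i < n \<and> x $ i \<noteq> 0})"
    unfolding S_def by (auto simp: less_Suc_eq_0_disj)
  then have card_S: "card S = Suc (vnnz x)"
    unfolding vnnz_def using x by (simp add: card_image)
  have "{(i, j). i < dim_row (lift_outer x) \<and> j < dim_col (lift_outer x) \<and> lift_outer x $$ (i, j) \<noteq> 0}
        = S \<times> S"
    using x unfolding S_def lift_outer_def Let_def by auto
  then show ?thesis unfolding mnnz_def using card_S by (simp add: card_cartesian_product)
qed

lemma mnnz_minus_le:
  assumes "X \<in> carrier_mat m m" "Y \<in> carrier_mat m m"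
  shows "mnnz (X - Y) \<le> mnnz X + mnnz Y"
proof -
  let ?supp = "\<lambda>X. {(i, j). i < dim_row X \<and> j < dim_col X \<and> X $$ (i, j) \<noteq> 0}"
  have fin: "finite (?supp X)" for X
    by (rule finite_subset[of _ "{..<dim_row X} \<times> {..<dim_col X}"]) auto
  have "?supp (X - Y) \<subseteq> ?supp X \<union> ?supp Y" using assms by auto
  then have "card (?supp (X - Y)) \<le> card (?supp X \<union> ?supp Y)" using fin by (intro card_mono) auto
  also have "\<dots> \<le> card (?supp X) + card (?supp Y)" by (rule card_Un_le)
  finally show ?thesis unfolding mnnz_def .
qed

lemma RIP_inj_on_sparse:
  assumes X: "X \<in> carrier_mat (n+1) (n+1)" and Y: "Y \<in> carrier_mat (n+1) (n+1)"
    and B: "Bop n N a b c Q X = Bop n N a b c Q Y"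
    and eps: "eps < 1" and RIP: "is_RIP n N a b c Q eps k" and sparse: "mnnz X + mnnz Y \<le> k"
  shows "X = Y"
proof (rule ccontr)
  assume "X \<noteq> Y"
  then obtain i j where "i < n+1" "j < n+1" "X $$ (i, j) \<noteq> Y $$ (i, j)"
    using X Y by (metis eq_matI carrier_matD)
  then have "X - Y \<noteq> 0\<^sub>m (n+1) (n+1)"
    using X Y by (metis index_minus_mat(1) index_zero_mat(1) carrier_matD right_minus_eq)
  moreover have "mnnz (X - Y) \<le> k" using mnnz_minus_le[OF X Y] sparse by simp
  moreover have "Bop n N a b c Q (X - Y) = 0\<^sub>v N"
    using Bop_minus[OF X Y] B by (simp add: Bop_def)
  \<comment> \<open>the RIP quotient is 0 whatever the spectral norm of X - Y is\<close>
  ultimately have "\<bar>0 / (spec_norm (X - Y))\<^sup>2 - 1\<bar> < eps"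
    using RIP X Y unfolding is_RIP_def by (force simp: vnorm_def)
  then show False using eps by simp
qed

lemma lifted_eq_lift_outer_optimal:
  assumes b: "\<And>i. i < N \<Longrightarrow> b i \<in> carrier_vec n" and c: "\<And>i. i < N \<Longrightarrow> c i \<in> carrier_vec n"
    and Q: "\<And>i. i < N \<Longrightarrow> Q i \<in> carrier_mat n n"
    and y: "y \<in> carrier_vec N"
    and opt: "optimalP n N a b c Q y x0"
    and lifted: "lifted_props n N a b c Q y X"
    and eps: "eps < 1" and RIP: "is_RIP n N a b c Q eps (2 * mnnz X)"
  shows "X = lift_outer x0"
proof -
  let ?x = "first_col_tail n X"
  have X: "X \<in> carrier_mat (n+1) (n+1)" and BX: "Bop n N a b c Q X = y"
    using lifted by (auto simp: lifted_props_def)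
  have X_lift: "X = lift_outer ?x"
    using lifted by (intro hermitian_rank_one_eq_lift_outer) (auto simp: lifted_props_def)
  have x: "?x \<in> carrier_vec n" by (simp add: first_col_tail_def)
  have "feasibleP n N a b c Q y ?x"
    using feasibleP_iff_Bop_lift_outer[OF b c Q y x] BX X_lift by simp
  then have x0: "x0 \<in> carrier_vec n" and feas0: "feasibleP n N a b c Q y x0"
    and sparser: "vnnz x0 \<le> vnnz ?x"
    using opt unfolding optimalP_def feasibleP_def by auto
  have "Bop n N a b c Q (lift_outer x0) = y"
    using feasibleP_iff_Bop_lift_outer[OF b c Q y x0] feas0 by simp
  moreover have "mnnz (lift_outer x0) \<le> mnnz X"
    using mnnz_lift_outer[OF x0] mnnz_lift_outer[OF x] sparser X_lift by (metis Suc_le_mono mult_le_mono)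
  ultimately show ?thesis
    using RIP_inj_on_sparse[OF X lift_outer_carrier[OF x0] _ eps RIP] BX by simp
qed

theorem theorem1:
  fixes n N :: nat and a :: "nat \<Rightarrow> complex" and b c :: "nat \<Rightarrow> complex vec"
    and Q :: "nat \<Rightarrow> complex mat" and y xbar :: "complex vec" and Xs :: "complex mat"
    and eps :: real
  assumes "n \<ge> 1" and "N \<ge> 1"
    and "\<And>i. i < N \<Longrightarrow> b i \<in> carrier_vec n"
    and "\<And>i. i < N \<Longrightarrow> c i \<in> carrier_vec n"
    and "\<And>i. i < N \<Longrightarrow> Q i \<in> carrier_mat n n"
    and "y \<in> carrier_vec N"
    and "optimalP n N a b c Q y xbar"
    and "lifted_props n N a b c Q y Xs"
    and "eps < 1"
    and "is_RIP n N a b c Q eps (2 * mnnz Xs)"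
  shows "Xs = lift_outer xbar \<and> first_col_tail n Xs = xbar \<and>
         (\<forall>X. lifted_props n N a b c Q y X \<and>
             (\<exists>eps'. eps' < 1 \<and> is_RIP n N a b c Q eps' (2 * mnnz X)) \<longrightarrow> X = Xs) \<and>
         (\<forall>x. optimalP n N a b c Q y x \<longrightarrow> x = xbar)"
proof -
  have lift_optimal: "X = lift_outer x0" if "optimalP n N a b c Q y x0"
    and "lifted_props n N a b c Q y X" and "e < 1" and "is_RIP n N a b c Q e (2 * mnnz X)" for X x0 e
    using assms(3-6) that by (rule lifted_eq_lift_outer_optimal)
  have Xs: "Xs = lift_outer xbar" by (rule lift_optimal[OF assms(7-10)])
  have "xbar \<in> carrier_vec n" using assms(7) by (simp add: optimalP_def feasibleP_def)
  then have tail: "first_col_tail n Xs = xbar" using Xs first_col_tail_lift_outer by simp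
  have "X = Xs" if "lifted_props n N a b c Q y X"
    and "\<exists>eps'. eps' < 1 \<and> is_RIP n N a b c Q eps' (2 * mnnz X)" for X
    using that lift_optimal[OF assms(7)] Xs by blast
  moreover have "x = xbar" if "optimalP n N a b c Q y x" for x
  proof -
    have "x \<in> carrier_vec n" using that by (simp add: optimalP_def feasibleP_def)
    then show ?thesis using lift_optimal[OF that assms(8-10)] tail first_col_tail_lift_outer by simp
  qed
  ultimately show ?thesis using Xs tail by blast
qed

end
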